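(* Let $X$ and $Y$ be nonempty totally bounded metric spaces. Then $d^{us}_{GH}(X,Y)=d_{GH}(X,Y)$.
   Context: For a metric space, $|xy|$ denotes distance. A set-valued map $f:X\rightrightarrows Y$ assigns to each $x\in X$ a nonempty $f(x)\subseteq Y$ and is identified with its graph. A correspondence between $X$ and $Y$ is a subset $R\subseteq X\times Y$ whose projections to $X$ and to $Y$ are both surjective, regarded as the set-valued map $x\mapsto R(x)=\{y:(x,y)\in R\}$; $R^{-1}=\{(y,x):(x,y)\in R\}$; $\mathcal R(X,Y)$ is the set of all correspondences. The distortion of a nonempty $\sigma\subseteq X\times Y$ is $\operatorname{dis}\sigma=\sup\{||xx'|-|yy'||:(x,y),(x',y')\in\sigma\}\in[0,\infty]$, and $d_{GH}(X,Y)=\frac12\inf\{\operatorname{dis}R:R\in\mathcal R(X,Y)\}$. A set-valued map $f$ is upper semicontinuous if for every $x$ and every open $U\supseteq f(x)$ there is a neighborhood $V$ of $x$ with $f(x')\subseteq U$ for all $x'\in V$. $\mathcal R_{us}(X,Y)$ is the set of $R\in\mathcal R(X,Y)$ with both $R$ and $R^{-1}$ upper semicontinuous, and $d^{us}_{GH}(X,Y)=\frac12\inf\{\operatorname{dis}R:R\in\mathcal R_{us}(X,Y)\}$. *)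

theory Defs
  imports "HOL-Analysis.Analysis"
begin

text \<open>Metric spaces are modelled as subsets X of a type of class metric_space,
  with the restricted metric. Correspondences are relations R \<subseteq> X \<times> Y
  with both projections surjective.\<close>

definition correspondences :: "'a::metric_space set \<Rightarrow> 'b::metric_space set \<Rightarrow> ('a \<times> 'b) set set" where
  "correspondences X Y = {R. R \<subseteq> X \<times> Y \<and> fst ` R = X \<and> snd ` R = Y}"

definition distortion :: "('a::metric_space \<times> 'b::metric_space) set \<Rightarrow> ereal" where
  "distortion \<sigma> = (SUP p\<in>\<sigma> \<times> \<sigma>.
      ereal \<bar>dist (fst (fst p)) (fst (snd p)) - dist (snd (fst p)) (snd (snd p))\<bar>)"

definition usc_on :: "'a::metric_space set \<Rightarrow> ('a \<times> 'b::metric_space) set \<Rightarrow> bool" where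
  "usc_on X R \<longleftrightarrow> (\<forall>x\<in>X. \<forall>U. open U \<and> R `` {x} \<subseteq> U \<longrightarrow>
      (\<exists>e>0. \<forall>x'\<in>X. dist x' x < e \<longrightarrow> R `` {x'} \<subseteq> U))"

definition us_correspondences :: "'a::metric_space set \<Rightarrow> 'b::metric_space set \<Rightarrow> ('a \<times> 'b) set set" where
  "us_correspondences X Y = {R \<in> correspondences X Y. usc_on X R \<and> usc_on Y (converse R)}"

definition GH_dist :: "'a::metric_space set \<Rightarrow> 'b::metric_space set \<Rightarrow> ereal" where
  "GH_dist X Y = (INF R\<in>correspondences X Y. distortion R) / 2"

definition GH_dist_us :: "'a::metric_space set \<Rightarrow> 'b::metric_space set \<Rightarrow> ereal" where
  "GH_dist_us X Y = (INF R\<in>us_correspondences X Y. distortion R) / 2"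

end

theory Submission
  imports Defs
begin

text \<open>Given a correspondence R and \<epsilon> > 0, fix finite \<epsilon>-nets of X and Y and relate x to y
  whenever some (a, b) \<in> R is such that x and a lie within \<epsilon> of a common net point of X, and
  y and b within \<epsilon> of a common net point of Y. This relation contains R and moves every point
  by at most 2\<epsilon>, so its distortion exceeds that of R by at most 8\<epsilon>. Since the net is finite,
  every point close enough to x is \<epsilon>-near only to net points that are already \<epsilon>-near to x;
  hence the fibres of the new relation can only shrink locally, which gives upper semicontinuity
  in both directions.\<close>

lemma usc_onI_fibres_eventually_shrink:
  assumes "\<And>x. x \<in> X \<Longrightarrow> \<forall>\<^sub>F x' in nhds x. R `` {x'} \<subseteq> R `` {x}"
  shows "usc_on X R"
  unfolding usc_on_def
proof (intro ballI allI impI)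
  fix x U assume "x \<in> X" "open U \<and> R `` {x} \<subseteq> U"
  with assms[of x] show "\<exists>e>0. \<forall>x'\<in>X. dist x' x < e \<longrightarrow> R `` {x'} \<subseteq> U"
    unfolding eventually_nhds_metric by blast
qed

lemma correspondences_superset:
  assumes "R \<in> correspondences X Y" and "R \<subseteq> S" and "S \<subseteq> X \<times> Y"
  shows "S \<in> correspondences X Y"
  using assms unfolding correspondences_def by (auto intro: rev_image_eqI)

lemma distortion_pair_le:
  assumes "(x, y) \<in> \<sigma>" and "(x', y') \<in> \<sigma>"
  shows "ereal \<bar>dist x x' - dist y y'\<bar> \<le> distortion \<sigma>"
  unfolding distortion_def using assms by (intro SUP_upper2[of "((x, y), (x', y'))"]) auto

lemma distortion_leI:
  assumes "\<And>x y x' y'. (x, y) \<in> \<sigma> \<Longrightarrow> (x', y') \<in> \<sigma> \<Longrightarrow> ereal \<bar>dist x x' - dist y y'\<bar> \<le> B"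
  shows "distortion \<sigma> \<le> B"
  unfolding distortion_def using assms by (intro SUP_least) auto

lemma distortion_le_if_close:
  assumes close: "\<And>x y. (x, y) \<in> S \<Longrightarrow> \<exists>(a, b)\<in>R. dist x a \<le> \<delta> \<and> dist y b \<le> \<delta>"
  shows "distortion S \<le> distortion R + ereal (4 * \<delta>)"
proof (rule distortion_leI)
  fix x y x' y' assume "(x, y) \<in> S" "(x', y') \<in> S"
  then obtain a b a' b' where ab: "(a, b) \<in> R" "dist x a \<le> \<delta>" "dist y b \<le> \<delta>"
    and ab': "(a', b') \<in> R" "dist x' a' \<le> \<delta>" "dist y' b' \<le> \<delta>"
    using close by blast
  have "\<bar>dist x x' - dist a a'\<bar> \<le> dist x a + dist x' a'"
    and "\<bar>dist y y' - dist b b'\<bar> \<le> dist y b + dist y' b'"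
    by (smt (verit) dist_commute dist_triangle)+
  with ab ab' have "ereal \<bar>dist x x' - dist y y'\<bar> \<le> ereal \<bar>dist a a' - dist b b'\<bar> + ereal (4 * \<delta>)"
    by simp
  also have "\<dots> \<le> distortion R + ereal (4 * \<delta>)"
    using ab(1) ab'(1) by (intro add_right_mono distortion_pair_le)
  finally show "ereal \<bar>dist x x' - dist y y'\<bar> \<le> distortion R + ereal (4 * \<delta>)" .
qed

lemma finite_Int_cball_eventually_subset:
  fixes x :: "'a::metric_space"
  assumes "finite N"
  shows "\<forall>\<^sub>F x' in nhds x. N \<inter> cball x' r \<subseteq> N \<inter> cball x r"
proof -
  have "\<forall>\<^sub>F x' in nhds x. c \<in> cball x' r \<longrightarrow> c \<in> cball x r" for c
  proof (cases "c \<in> cball x r")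
    case False
    then have "\<forall>\<^sub>F x' in nhds x. x' \<in> - cball c r"
      by (intro eventually_nhds_in_open) (auto simp: dist_commute)
    then show ?thesis by eventually_elim (auto simp: dist_commute)
  qed simp
  with assms have "\<forall>\<^sub>F x' in nhds x. \<forall>c\<in>N. c \<in> cball x' r \<longrightarrow> c \<in> cball x r"
    by (simp add: eventually_ball_finite_distrib)
  then show ?thesis by eventually_elim blast
qed

definition net_thickening ::
    "'a::metric_space set \<Rightarrow> 'b::metric_space set \<Rightarrow> real \<Rightarrow> 'a set \<Rightarrow> 'b set \<Rightarrow> ('a \<times> 'b) set \<Rightarrow> ('a \<times> 'b) set"
  where "net_thickening NX NY \<epsilon> X Y R = {(x, y) \<in> X \<times> Y. \<exists>(a, b)\<in>R.
      NX \<inter> cball x \<epsilon> \<inter> cball a \<epsilon> \<noteq> {} \<and> NY \<inter> cball y \<epsilon> \<inter> cball b \<epsilon> \<noteq> {}}"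

lemma converse_net_thickening:
  "converse (net_thickening NX NY \<epsilon> X Y R) = net_thickening NY NX \<epsilon> Y X (converse R)"
  unfolding net_thickening_def by auto

lemma subset_net_thickening:
  assumes "R \<subseteq> X \<times> Y" and "X \<subseteq> (\<Union>c\<in>NX. cball c \<epsilon>)" and "Y \<subseteq> (\<Union>d\<in>NY. cball d \<epsilon>)"
  shows "R \<subseteq> net_thickening NX NY \<epsilon> X Y R"
proof clarify
  fix x y assume xy: "(x, y) \<in> R"
  with assms(1) have "x \<in> X" "y \<in> Y" by auto
  with assms(2,3) obtain c d where "c \<in> NX" "x \<in> cball c \<epsilon>" "d \<in> NY" "y \<in> cball d \<epsilon>"
    by blast
  then have "c \<in> NX \<inter> cball x \<epsilon> \<inter> cball x \<epsilon>" "d \<in> NY \<inter> cball y \<epsilon> \<inter> cball y \<epsilon>"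
    by (simp_all add: dist_commute)
  with xy \<open>x \<in> X\<close> \<open>y \<in> Y\<close> show "(x, y) \<in> net_thickening NX NY \<epsilon> X Y R"
    unfolding net_thickening_def by blast
qed

lemma net_thickening_close:
  assumes "(x, y) \<in> net_thickening NX NY \<epsilon> X Y R"
  shows "\<exists>(a, b)\<in>R. dist x a \<le> 2 * \<epsilon> \<and> dist y b \<le> 2 * \<epsilon>"
proof -
  from assms obtain a b c d where "(a, b) \<in> R"
    and "dist x c \<le> \<epsilon>" "dist a c \<le> \<epsilon>" "dist y d \<le> \<epsilon>" "dist b d \<le> \<epsilon>"
    unfolding net_thickening_def by (auto simp: dist_commute)
  moreover from this have "dist x a \<le> 2 * \<epsilon>" "dist y b \<le> 2 * \<epsilon>"
    using dist_triangle3[of x a c] dist_triangle3[of y b d] by (simp_all add: dist_commute)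
  ultimately show ?thesis by blast
qed

lemma usc_on_net_thickening:
  assumes "finite NX"
  shows "usc_on X (net_thickening NX NY \<epsilon> X Y R)"
proof (rule usc_onI_fibres_eventually_shrink)
  fix x assume "x \<in> X"
  from finite_Int_cball_eventually_subset[OF assms]
  show "\<forall>\<^sub>F x' in nhds x. net_thickening NX NY \<epsilon> X Y R `` {x'} \<subseteq> net_thickening NX NY \<epsilon> X Y R `` {x}"
    by eventually_elim (use \<open>x \<in> X\<close> in \<open>auto simp: net_thickening_def\<close>)
qed

lemma totally_bounded_finite_cball_cover:
  assumes "totally_bounded S" and "\<epsilon> > 0"
  obtains N where "finite N" and "S \<subseteq> (\<Union>c\<in>N. cball c \<epsilon>)"
proof -
  from assms obtain N where "finite N" "S \<subseteq> (\<Union>c\<in>N. {y. dist c y < \<epsilon>})"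
    unfolding totally_bounded_metric by blast
  moreover have "(\<Union>c\<in>N. {y. dist c y < \<epsilon>}) \<subseteq> (\<Union>c\<in>N. cball c \<epsilon>)"
    by auto
  ultimately show thesis
    using that by (meson order_trans)
qed

lemma exists_us_correspondence_distortion_le:
  fixes X :: "'a::metric_space set" and Y :: "'b::metric_space set"
  assumes "totally_bounded X" and "totally_bounded Y"
    and R: "R \<in> correspondences X Y" and "\<epsilon> > 0"
  shows "\<exists>R'\<in>us_correspondences X Y. distortion R' \<le> distortion R + ereal (8 * \<epsilon>)"
proof -
  obtain NX NY where "finite NX" "X \<subseteq> (\<Union>c\<in>NX. cball c \<epsilon>)"
    and "finite NY" "Y \<subseteq> (\<Union>d\<in>NY. cball d \<epsilon>)"
    using assms totally_bounded_finite_cball_cover by metis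
  define R' where "R' = net_thickening NX NY \<epsilon> X Y R"
  have "R \<subseteq> X \<times> Y"
    using R unfolding correspondences_def by blast
  then have "R' \<in> correspondences X Y"
    using R \<open>X \<subseteq> _\<close> \<open>Y \<subseteq> _\<close> unfolding R'_def
    by (intro correspondences_superset[OF R] subset_net_thickening) (auto simp: net_thickening_def)
  moreover have "usc_on X R'" "usc_on Y (converse R')"
    unfolding R'_def converse_net_thickening
    using \<open>finite NX\<close> \<open>finite NY\<close> by (simp_all add: usc_on_net_thickening)
  moreover have "distortion R' \<le> distortion R + ereal (4 * (2 * \<epsilon>))"
    unfolding R'_def by (intro distortion_le_if_close net_thickening_close)
  ultimately show ?thesis
    unfolding us_correspondences_def by auto
qed

theorem mainTheorem8:
  fixes X :: "'a::metric_space set" and Y :: "'b::metric_space set"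
  assumes "X \<noteq> {}" and "Y \<noteq> {}"
    and "totally_bounded X" and "totally_bounded Y"
  shows "GH_dist_us X Y = GH_dist X Y"
proof -
  have "us_correspondences X Y \<subseteq> correspondences X Y"
    unfolding us_correspondences_def by auto
  then have "(INF R\<in>correspondences X Y. distortion R) \<le> (INF R\<in>us_correspondences X Y. distortion R)"
    by (rule INF_superset_mono) simp
  moreover have "(INF R\<in>us_correspondences X Y. distortion R) \<le> distortion R"
    if R: "R \<in> correspondences X Y" for R
  proof (rule ereal_le_epsilon2)
    fix e :: real assume "e > 0"
    then obtain R' where "R' \<in> us_correspondences X Y" "distortion R' \<le> distortion R + ereal e"
      using exists_us_correspondence_distortion_le[OF assms(3,4) R, of "e / 8"] by auto
    then show "(INF R\<in>us_correspondences X Y. distortion R) \<le> distortion R + ereal e"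
      by (meson INF_lower order_trans)
  qed
  ultimately show ?thesis
    unfolding GH_dist_us_def GH_dist_def by (metis INF_greatest antisym)
qed

end
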